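(* Let $R\subseteq S$ be as in the context, with $q=|R/\mathfrak{m}|$ and $S/\mathfrak{M}=\mathbb{F}_{q^m}$. Let $1\le\ell\le q-1$ and let $\gamma$ be a primitive element of $\mathbb{F}_{q^m}$ (i.e., a generator of $\mathbb{F}_{q^m}^*$). Let $a_1,\ldots,a_\ell\in S^*$ be such that $\overline{a}_i=\gamma^{i-1}$ for $i=1,\ldots,\ell$, where $\overline{a}$ denotes the image of $a$ in $S/\mathfrak{M}$. Then $a_i-a_j^\beta\in S^*$ for all $\beta\in S^*$ and all $1\le i<j\le\ell$.
   Context: $R$ is a finite commutative chain ring with maximal ideal $\mathfrak{m}$, $q=|R/\mathfrak{m}|$; $S=R[x]/(h)$ with $h$ monic of degree $m$ irreducible modulo $\mathfrak{m}$, local with maximal ideal $\mathfrak{M}=\mathfrak{m}S$, unit group $S^*=S\setminus\mathfrak{M}$ and residue field $S/\mathfrak{M}=\mathbb{F}_{q^m}$. $\sigma$ is a ring automorphism of $S$ generating the Galois group of $R\subseteq S$, with fixed ring $R$, reducing modulo $\mathfrak{M}$ to $y\mapsto y^q$. For $a\in S$, $\beta\in S^*$: $a^\beta=\sigma(\beta)a\beta^{-1}$. *)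

theory Defs
  imports "HOL-Computational_Algebra.Polynomial"
begin

definition subring_of :: "'a::comm_ring_1 set \<Rightarrow> bool" where
  "subring_of R \<longleftrightarrow> 0 \<in> R \<and> 1 \<in> R \<and>
     (\<forall>x\<in>R. \<forall>y\<in>R. x + y \<in> R \<and> x - y \<in> R \<and> x * y \<in> R)"

definition ideal_of :: "'a::comm_ring_1 set \<Rightarrow> 'a set \<Rightarrow> bool" where
  "ideal_of R I \<longleftrightarrow> I \<subseteq> R \<and> 0 \<in> I \<and>
     (\<forall>x\<in>I. \<forall>y\<in>I. x + y \<in> I) \<and> (\<forall>r\<in>R. \<forall>x\<in>I. r * x \<in> I)"

definition chain_ring :: "'a::comm_ring_1 set \<Rightarrow> bool" where
  "chain_ring R \<longleftrightarrow> subring_of R \<and>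
     (\<forall>I J. ideal_of R I \<and> ideal_of R J \<longrightarrow> I \<subseteq> J \<or> J \<subseteq> I)"

definition max_ideal_of :: "'a::comm_ring_1 set \<Rightarrow> 'a set" where
  "max_ideal_of R = {r \<in> R. \<not> (\<exists>r'\<in>R. r * r' = 1)}"

definition ring_aut :: "('a::comm_ring_1 \<Rightarrow> 'a) \<Rightarrow> bool" where
  "ring_aut f \<longleftrightarrow> bij f \<and> f 1 = 1 \<and> (\<forall>x y. f (x + y) = f x + f y \<and> f (x * y) = f x * f y)"

definition ring_hom_fun :: "('a::comm_ring_1 \<Rightarrow> 'b::comm_ring_1) \<Rightarrow> bool" where
  "ring_hom_fun f \<longleftrightarrow> f 1 = 1 \<and> (\<forall>x y. f (x + y) = f x + f y \<and> f (x * y) = f x * f y)"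

definition galois_group :: "'a::comm_ring_1 set \<Rightarrow> ('a \<Rightarrow> 'a) set" where
  "galois_group R = {f. ring_aut f \<and> (\<forall>r\<in>R. f r = r)}"

definition irreducible_over :: "'b::field set \<Rightarrow> 'b poly \<Rightarrow> bool" where
  "irreducible_over K p \<longleftrightarrow> (\<forall>k. coeff p k \<in> K) \<and> degree p \<ge> 1 \<and>
     (\<forall>f g. (\<forall>k. coeff f k \<in> K) \<and> (\<forall>k. coeff g k \<in> K) \<and> p = f * g
        \<longrightarrow> degree f = 0 \<or> degree g = 0)"

text \<open>The twisted action a^\<beta> = \<sigma>(\<beta>) a \<beta>^{-1}; \<beta>' is the inverse of the unit \<beta>.\<close>

end

theory Submission
  imports Defs "HOL-Algebra.Multiplicative_Group"
begin

text \<open>Modulo the maximal ideal, the residue of \<open>a\<^sup>\<beta>\<close> is \<open>b^(q - 1) * a\<close>, where \<open>b\<close> is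
  the residue of \<open>\<beta>\<close>. So if \<open>a\<^sub>i - a\<^sub>j\<^sup>\<beta>\<close> were not a unit, \<open>\<gamma>^(j - i)\<close> would be a
  \<open>(q - 1)\<close>-th power in the residue field. The residues of \<open>R\<close> form a subfield with \<open>q\<close>
  elements, so by Lagrange \<open>q - 1\<close> divides the order of the cyclic unit group of the residue
  field, and there the power \<open>\<gamma>^k\<close> of the generator is a \<open>(q - 1)\<close>-th power only if \<open>q - 1\<close>
  divides \<open>k\<close>; but \<open>0 < j - i < q - 1\<close>.\<close>

hide_const (open) UnivPoly.coeff

lemma (in group) generator_pow_eq_pow_imp_dvd:
  fixes k d :: nat
  assumes fin: "finite (carrier G)" and gen: "generate G {g} = carrier G"
    and g: "g \<in> carrier G" and c: "c \<in> carrier G"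
    and d: "d dvd order G" and eq: "g [^] k = c [^] d"
  shows "d dvd k"
proof -
  obtain e where n: "order G = d * e" using d by blast
  have "e > 0" using n order_gt_0_iff_finite fin by (metis mult_0_right neq0_conv)
  have "g [^] (k * e) = c [^] order G"
    using g c by (simp add: n eq flip: nat_pow_pow)
  also have "\<dots> = \<one>" using c by (rule pow_order_eq_1)
  finally have "ord g dvd k * e" using g by (simp add: pow_eq_id)
  moreover have "ord g = order G"
    using g gen by (simp add: generate_pow_card order_def)
  ultimately have "d * e dvd k * e" by (simp add: n)
  with \<open>e > 0\<close> show ?thesis by simp
qed

definition nonzero_mult_group :: "'a::field monoid" where
  "nonzero_mult_group = \<lparr>carrier = UNIV - {0}, mult = (*), one = 1\<rparr>"

lemma nonzero_mult_group_simps [simp]: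
  "carrier (nonzero_mult_group :: 'a::field monoid) = UNIV - {0}"
  "x \<otimes>\<^bsub>nonzero_mult_group\<^esub> y = x * y"
  "\<one>\<^bsub>nonzero_mult_group\<^esub> = 1"
  "x [^]\<^bsub>nonzero_mult_group\<^esub> (n::nat) = x ^ n"
  by (induction n) (simp_all add: nonzero_mult_group_def)

lemma group_nonzero_mult_group: "group (nonzero_mult_group :: 'a::field monoid)"
proof (rule groupI)
  fix x :: 'a assume "x \<in> carrier nonzero_mult_group"
  then show "\<exists>y\<in>carrier nonzero_mult_group. y \<otimes>\<^bsub>nonzero_mult_group\<^esub> x = \<one>\<^bsub>nonzero_mult_group\<^esub>"
    by (intro bexI[of _ "inverse x"]) auto
qed auto

lemma order_nonzero_mult_group:
  "order (nonzero_mult_group :: 'a::{field,finite} monoid) = card (UNIV :: 'a set) - 1"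
  by (simp add: order_def card_Diff_singleton)

lemma card_mult_closed_dvd_card_minus_one:
  fixes H :: "'a::{field,finite} set"
  assumes H0: "0 \<notin> H" and H1: "1 \<in> H"
    and H_mult: "\<And>x y. x \<in> H \<Longrightarrow> y \<in> H \<Longrightarrow> x * y \<in> H"
  shows "card H dvd card (UNIV :: 'a set) - 1"
proof -
  let ?G = "nonzero_mult_group :: 'a monoid"
  interpret group ?G by (rule group_nonzero_mult_group)
  have "subgroup H ?G"
  proof (rule subgroupI)
    fix x assume x: "x \<in> H"
    have "(*) x ` H = H"
      by (rule endo_inj_surj) (use H0 x H_mult in \<open>auto simp: inj_on_def\<close>)
    then obtain y where y: "y \<in> H" "x * y = 1" using H1 by (metis imageE)
    then have "inv\<^bsub>?G\<^esub> x = y" using H0 x by (intro inv_equality) (auto simp: mult.commute)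
    with y show "inv\<^bsub>?G\<^esub> x \<in> H" by simp
  qed (use H0 H1 H_mult in auto)
  then have "card H dvd order ?G" by (metis dvd_triv_right lagrange)
  then show ?thesis by (simp add: order_nonzero_mult_group)
qed

lemma primitive_pow_eq_pow_imp_dvd:
  fixes \<gamma> c :: "'a::{field,finite}" and k d :: nat
  assumes prim: "\<forall>y. y \<noteq> 0 \<longrightarrow> (\<exists>k::nat. y = \<gamma> ^ k)"
    and "\<gamma> \<noteq> 0" and "c \<noteq> 0"
    and d: "d dvd card (UNIV :: 'a set) - 1" and eq: "\<gamma> ^ k = c ^ d"
  shows "d dvd k"
proof -
  let ?G = "nonzero_mult_group :: 'a monoid"
  interpret group ?G by (rule group_nonzero_mult_group)
  have fin: "finite (carrier ?G)" and g: "\<gamma> \<in> carrier ?G" and c: "c \<in> carrier ?G"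
    using \<open>\<gamma> \<noteq> 0\<close> \<open>c \<noteq> 0\<close> by simp_all
  have "carrier ?G \<subseteq> generate ?G {\<gamma>}"
  proof
    fix y assume "y \<in> carrier ?G"
    then have "y \<noteq> 0" by simp
    then obtain k :: nat where "y = \<gamma> ^ k" using prim by blast
    then show "y \<in> generate ?G {\<gamma>}"
      unfolding generate_pow_on_finite_carrier[OF fin g] by auto
  qed
  then have gen: "generate ?G {\<gamma>} = carrier ?G"
    using generate_incl[of "{\<gamma>}"] g by blast
  from d have d': "d dvd order ?G" by (simp add: order_nonzero_mult_group)
  from eq have "\<gamma> [^]\<^bsub>?G\<^esub> k = c [^]\<^bsub>?G\<^esub> d" by simp
  then show ?thesis by (rule generator_pow_eq_pow_imp_dvd[OF fin gen g c d'])
qed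

lemma primitive_pow_eq_mult_pow_imp_dvd:
  fixes \<gamma> b :: "'a::{field,finite}" and i j d :: nat
  assumes prim: "\<forall>y. y \<noteq> 0 \<longrightarrow> (\<exists>k::nat. y = \<gamma> ^ k)"
    and "\<gamma> \<noteq> 0" and "b \<noteq> 0" and d: "d dvd card (UNIV :: 'a set) - 1"
    and "i \<le> j" and eq: "\<gamma> ^ i = b ^ d * \<gamma> ^ j"
  shows "d dvd j - i"
proof -
  have "\<gamma> ^ j = \<gamma> ^ i * \<gamma> ^ (j - i)"
    using \<open>i \<le> j\<close> by (simp flip: power_add)
  with eq \<open>\<gamma> \<noteq> 0\<close> \<open>b \<noteq> 0\<close> have "\<gamma> ^ (j - i) = inverse b ^ d"
    by (simp add: power_inverse field_simps)
  with \<open>b \<noteq> 0\<close> show ?thesis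
    by (intro primitive_pow_eq_pow_imp_dvd[OF prim \<open>\<gamma> \<noteq> 0\<close> _ d]) simp_all
qed

lemma ring_hom_fun_0: "ring_hom_fun f \<Longrightarrow> f 0 = 0"
  unfolding ring_hom_fun_def by (metis add_cancel_right_right add_0)

lemma ring_hom_fun_diff: "ring_hom_fun f \<Longrightarrow> f (x - y) = f x - f y"
  unfolding ring_hom_fun_def by (metis diff_add_cancel eq_diff_eq)

lemma ring_hom_fun_unit: "ring_hom_fun f \<Longrightarrow> x * y = 1 \<Longrightarrow> f x * f y = 1"
  unfolding ring_hom_fun_def by metis

lemma card_subring_image_minus_one_dvd:
  fixes f :: "'a::comm_ring_1 \<Rightarrow> 'b::{field,finite}"
  assumes R: "subring_of R" and f: "ring_hom_fun f"
  shows "card (f ` R) - 1 dvd card (UNIV :: 'b set) - 1"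
proof -
  have "0 \<in> f ` R" "1 \<in> f ` R" "\<And>x y. x \<in> f ` R \<Longrightarrow> y \<in> f ` R \<Longrightarrow> x * y \<in> f ` R"
    using R f ring_hom_fun_0[OF f] unfolding subring_of_def ring_hom_fun_def
    by (auto intro: image_eqI[of 0] image_eqI[of 1] image_eqI[of _ f "_ * _"] simp del: f)
  then have "card (f ` R - {0}) dvd card (UNIV :: 'b set) - 1"
    by (intro card_mult_closed_dvd_card_minus_one) auto
  with \<open>0 \<in> f ` R\<close> show ?thesis by (simp add: card_Diff_singleton)
qed

lemma ring_hom_fun_twisted_action:
  fixes red :: "'a::comm_ring_1 \<Rightarrow> 'b::comm_ring_1"
  assumes red: "ring_hom_fun red" and frob: "\<forall>y. red (\<sigma> y) = red y ^ q"
    and "q > 0" and \<beta>: "\<beta> * \<beta>' = 1"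
  shows "red (\<sigma> \<beta> * a * \<beta>') = red \<beta> ^ (q - 1) * red a"
proof -
  have "red (\<sigma> \<beta> * a * \<beta>') = red \<beta> ^ (q - 1) * red a * (red \<beta> * red \<beta>')"
    using red frob \<open>q > 0\<close> by (simp add: ring_hom_fun_def power_eq_if mult_ac)
  with ring_hom_fun_unit[OF red \<beta>] show ?thesis by simp
qed

theorem proposition2:
  fixes R :: "'a::{comm_ring_1,finite} set"
    and h :: "'a poly" and \<xi> :: 'a and m :: nat
    and \<sigma> :: "'a \<Rightarrow> 'a"
    and red :: "'a \<Rightarrow> 'b::{field,finite}"
    and q l :: nat and \<gamma> :: 'b and a :: "nat \<Rightarrow> 'a"
  assumes R_chain: "chain_ring R"
    and h_coeffs: "\<forall>k. coeff h k \<in> R" and h_monic: "lead_coeff h = 1"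
    and h_deg: "degree h = m" and h_root: "poly h \<xi> = 0"
    and S_basis: "\<forall>s. \<exists>!c. (\<forall>k. c k \<in> R) \<and> (\<forall>k\<ge>m. c k = 0) \<and> s = (\<Sum>k<m. c k * \<xi> ^ k)"
    and red_hom: "ring_hom_fun red" and red_surj: "surj red"
    and red_ker: "\<forall>s. red s = 0 \<longleftrightarrow> \<not> s dvd 1"
    and h_irred: "irreducible_over (red ` R) (map_poly red h)"
    and q_def: "q = card (red ` R)"
    and sigma_aut: "ring_aut \<sigma>"
    and sigma_gen: "\<forall>\<tau>\<in>galois_group R. \<exists>k. \<tau> = \<sigma> ^^ k"
    and sigma_fix: "{s. \<sigma> s = s} = R"
    and sigma_frob: "\<forall>y. red (\<sigma> y) = red y ^ q"
    and l_bounds: "1 \<le> l" "l \<le> q - 1"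
    and gamma_prim: "\<forall>y::'b. y \<noteq> 0 \<longrightarrow> (\<exists>k::nat. y = \<gamma> ^ k)"
    and a_units: "\<forall>i\<in>{1..l}. a i dvd 1"
    and a_red: "\<forall>i\<in>{1..l}. red (a i) = \<gamma> ^ (i - 1)"
  shows "\<forall>\<beta> \<beta>'. \<beta> * \<beta>' = 1 \<longrightarrow>
           (\<forall>i j. 1 \<le> i \<and> i < j \<and> j \<le> l \<longrightarrow> (a i - \<sigma> \<beta> * a j * \<beta>') dvd 1)"
proof (intro allI impI)
  fix \<beta> \<beta>' :: 'a and i j :: nat
  assume \<beta>: "\<beta> * \<beta>' = 1" and ij: "1 \<le> i \<and> i < j \<and> j \<le> l"
  have q_dvd: "q - 1 dvd card (UNIV :: 'b set) - 1"
    using card_subring_image_minus_one_dvd[OF _ red_hom] R_chain q_def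
    by (simp add: chain_ring_def)
  have "red \<beta> \<noteq> 0" using ring_hom_fun_unit[OF red_hom \<beta>] by auto
  \<comment> \<open>not from \<open>gamma_prim\<close>, which \<open>\<gamma> = 0\<close> also satisfies in \<open>GF(2)\<close>\<close>
  have "red (a j) \<noteq> 0" using red_ker a_units ij by auto
  then have "\<gamma> \<noteq> 0" using a_red ij by auto
  show "(a i - \<sigma> \<beta> * a j * \<beta>') dvd 1"
  proof (rule ccontr)
    assume "\<not> (a i - \<sigma> \<beta> * a j * \<beta>') dvd 1"
    then have "red (a i) = red (\<sigma> \<beta> * a j * \<beta>')"
      using red_ker ring_hom_fun_diff[OF red_hom] by (metis eq_iff_diff_eq_0)
    also have "\<dots> = red \<beta> ^ (q - 1) * red (a j)"
      using ring_hom_fun_twisted_action[OF red_hom sigma_frob _ \<beta>] l_bounds by simp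
    finally have "\<gamma> ^ (i - 1) = red \<beta> ^ (q - 1) * \<gamma> ^ (j - 1)"
      using a_red ij by simp
    then have "q - 1 dvd (j - 1) - (i - 1)" using ij
      by (intro primitive_pow_eq_mult_pow_imp_dvd[OF gamma_prim \<open>\<gamma> \<noteq> 0\<close> \<open>red \<beta> \<noteq> 0\<close> q_dvd]) auto
    moreover have "0 < (j - 1) - (i - 1)" "(j - 1) - (i - 1) < q - 1" using ij l_bounds by auto
    ultimately show False by (simp add: nat_dvd_not_less)
  qed
qed

end
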